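(* Let $\pi_1,\pi_2\colon\mathsf{States}\to\mathbb{R}_{\ge0}$ be potential functions such that $\pi_1\preceq\pi_1\oplus\pi_2$ (where $\pi_1\oplus\pi_2$ is itself used as a potential function). Then for every program $C$ and every $X\in\mathbb{A}_{\pi_1}$: if $\mathrm{mod}(C)\cap\mathrm{Vars}(\pi_2)=\emptyset$ and $X+(\pi_1\oplus\pi_2)\preceq(X+\pi_1)\oplus\pi_2$, then $$\mathsf{aert}_{\pi_1\oplus\pi_2}[\![C]\!](X)\;\preceq\;\big(\mathsf{aert}_{\pi_1}[\![C]\!](X)+\pi_1\big)\oplus\pi_2\;-\;\pi_1\oplus\pi_2 .$$
   Context: States and programs. Fix a finite set $\mathrm{Vars}$ of variables; values are $\mathbb{N}$, locations are $\mathbb{N}_{>0}$. A stack is $s\colon \mathrm{Vars}\to\mathbb{N}$; a heap is a partial map $h$ from a finite set $\mathrm{dom}(h)\subseteq\mathbb{N}_{>0}$ to $\mathbb{N}$. $h_1\perp h_2$ means disjoint domains; then $h_1\star h_2$ is their union; $h_\emptyset$ is the empty heap. $\mathsf{States}$ is the set of pairs $(s,h)$. $s(e)$ is the value of a (heap-independent) arithmetic expression $e$ under $s$, $s\models\varphi$ means the Boolean expression $\varphi$ holds under $s$, $s[x\mapsto v]$ is the updated stack. Programs are generated by $C ::= \mathtt{tick}(e) \mid x:=e \mid x:=\mathtt{alloc}(e) \mid \langle e\rangle:=e' \mid x:=\langle e\rangle \mid \mathtt{free}(e) \mid \{C\}[p]\{C\} \mid \mathtt{if}(\varphi)\{C\}\mathtt{else}\{C\}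 \mid C;C \mid \mathtt{while}(\varphi)\{C\}$, where $p$ is an expression with $s(p)\in[0,1]\cap\mathbb{Q}$ for all $s$. The statements other than tick, probabilistic choice, conditional, sequencing and loops are called atomic. $\mathrm{mod}(C)$ is the set of variables potentially modified by $C$, i.e. the variables $x$ occurring as the target of $x:=e$, $x:=\mathtt{alloc}(e)$ or $x:=\langle e\rangle$ in $C$. For a function $g$ on states, $x\notin\mathrm{Vars}(g)$ means $g(s[x\mapsto v],h)=g(s,h)$ for all $(s,h)$ and $v$. Runtimes. $\mathbb{T}$ is the set of functions $\mathsf{States}\to[0,\infty]$, ordered pointwise by $\preceq$; arithmetic is pointwise with $0\cdot\infty=0$. $[\varphi]$ is the $0/1$-valued Iverson bracket. Truncated subtraction: $a\dot- b=\max(a-b,0)$, $\infty\dot- b=\infty$ for finite $b$, $a\dot-\infty=0$. Separating sum $(f\oplus g)(s,h)=\min\{f(s,h_1)+g(s,h_2)\mid h=h_1\star h_2\}$ (for nonnegative $f,g$); $(f \mathbin{-\!\!\ominus} g)(s,h)=\sup\{g(s,h\star h')\dot- f(s,h')\mid h'\perp h\}$; $(\inf y\colon f)(s,h)=\inf_{v\in\mathbb{N}} f(s[y\mapsto v],h)$, $(\sup y\colon f)(s,h)=\sup_{v\in\mathbb{N}}f(s[y\mapsto v],h)$; $f[x/e](s,h)=f(s[x\mapsto s(e)],h)$. $\mathsf{tm}(e)(s,h)=s(e)$ if $h=h_\emptyset$, else $\infty$; $[e\mapsto e'](s,h)=0$ if $\mathrm{dom}(h)=\{s(e)\}$ and $h(s(e))=s(e')$,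 else $\infty$; $[e\mapsto -](s,h)=0$ if $\mathrm{dom}(h)=\{s(e)\}$, else $\infty$; $\bigoplus_{i=1}^{e} f_i$ is the separating sum over $i=1,\dots,s(e)$ (empty one: $[\mathsf{emp}]$, which is $0$ if $h=h_\emptyset$, else $\infty$). $\mathsf{ert}[\![C]\!]\colon\mathbb{T}\to\mathbb{T}$ (with $v$ fresh): $\mathsf{ert}[\![\mathtt{tick}(e)]\!](f)=\mathsf{tm}(e)\oplus f$; $\mathsf{ert}[\![x:=e]\!](f)=f[x/e]$; $\mathsf{ert}[\![x:=\mathtt{alloc}(e)]\!](f)=\sup v\colon (\bigoplus_{i=1}^{e}[v+i-1\mapsto 0])\mathbin{-\!\!\ominus} f[x/v]$; $\mathsf{ert}[\![\langle e\rangle:=e']\!](f)=[e\mapsto-]\oplus([e\mapsto e']\mathbin{-\!\!\ominus} f)$; $\mathsf{ert}[\![x:=\langle e\rangle]\!](f)=\inf v\colon [e\mapsto v]\oplus([e\mapsto v]\mathbin{-\!\!\ominus} f[x/v])$; $\mathsf{ert}[\![\mathtt{free}(e)]\!](f)=[e\mapsto-]\oplus f$; $\mathsf{ert}[\![C_1;C_2]\!](f)=\mathsf{ert}[\![C_1]\!](\mathsf{ert}[\![C_2]\!](f))$; conditional: $[\varphi]\cdot\mathsf{ert}[\![C_1]\!](f)+[\neg\varphi]\cdot\mathsf{ert}[\![C_2]\!](f)$; probabilistic choice: $p\cdot\mathsf{ert}[\![C_1]\!](f)+(1-p)\cdot\mathsf{ert}[\![C_2]\!](f)$; $\mathsf{ert}[\![\mathtt{while}(\varphi)\{C\}]\!](f)=\mathrm{lfp}\,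 g.\ [\neg\varphi]\cdot f+[\varphi]\cdot\mathsf{ert}[\![C]\!](g)$. Amortized runtimes. A potential function is $\pi\colon\mathsf{States}\to\mathbb{R}_{\ge0}$. $\mathbb{A}_\pi=\{X\colon\mathsf{States}\to\mathbb{R}\cup\{\infty\}\mid -\pi\le X\}$, ordered pointwise (complete lattice, least element $-\pi$). $\mathsf{aert}_\pi[\![C]\!]\colon\mathbb{A}_\pi\to\mathbb{A}_\pi$: $\mathsf{aert}_\pi[\![\mathtt{tick}(e)]\!](X)=e+X$; for atomic $C$ other than tick, $\mathsf{aert}_\pi[\![C]\!](X)=\mathsf{ert}[\![C]\!](X+\pi)-\pi$; sequencing by composition; conditional $[\varphi]\cdot\mathsf{aert}_\pi[\![C_1]\!](X)+[\neg\varphi]\cdot\mathsf{aert}_\pi[\![C_2]\!](X)$; probabilistic choice $p\cdot\mathsf{aert}_\pi[\![C_1]\!](X)+(1-p)\cdot\mathsf{aert}_\pi[\![C_2]\!](X)$; $\mathsf{aert}_\pi[\![\mathtt{while}(\varphi)\{C'\}]\!](X)=\mathrm{lfp}\,Y.\ [\neg\varphi]\cdot X+[\varphi]\cdot\mathsf{aert}_\pi[\![C']\!](Y)$ in $(\mathbb{A}_\pi,\preceq)$. *)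

theory Defs
  imports Complex_Main "HOL-Library.Extended_Nonnegative_Real"
begin

type_synonym 'v stack = "'v \<Rightarrow> nat"

typedef heap = "{h :: nat \<rightharpoonup> nat. finite (dom h) \<and> 0 \<notin> dom h}"
  by (rule exI[of _ Map.empty]) auto

definition hdisj :: "heap \<Rightarrow> heap \<Rightarrow> bool" where
  "hdisj h1 h2 = (dom (Rep_heap h1) \<inter> dom (Rep_heap h2) = {})"

definition hunion :: "heap \<Rightarrow> heap \<Rightarrow> heap" where
  "hunion h1 h2 = Abs_heap (Rep_heap h1 ++ Rep_heap h2)"

definition hemp :: heap where
  "hemp = Abs_heap Map.empty"

type_synonym 'v state = "'v stack \<times> heap"

type_synonym 'v aexp = "'v stack \<Rightarrow> nat"
type_synonym 'v bexp = "'v stack \<Rightarrow> bool"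
type_synonym 'v pexp = "'v stack \<Rightarrow> real"

datatype 'v prog =
    Tick "'v aexp"
  | Assign 'v "'v aexp"
  | Alloc 'v "'v aexp"
  | Store "'v aexp" "'v aexp"          (* <e> := e' *)
  | Load 'v "'v aexp"                  (* x := <e> *)
  | Free "'v aexp"
  | PChoice "'v prog" "'v pexp" "'v prog"
  | If "'v bexp" "'v prog" "'v prog"
  | Seq "'v prog" "'v prog"
  | While "'v bexp" "'v prog"

primrec wf_prog :: "'v prog \<Rightarrow> bool" where
  "wf_prog (Tick e) = True"
| "wf_prog (Assign x e) = True"
| "wf_prog (Alloc x e) = True"
| "wf_prog (Store e e') = True"
| "wf_prog (Load x e) = True"
| "wf_prog (Free e) = True"
| "wf_prog (PChoice c1 p c2) =
     ((\<forall>s. p s \<in> \<rat> \<and> 0 \<le> p s \<and> p s \<le> 1) \<and> wf_prog c1 \<and> wf_prog c2)"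
| "wf_prog (If b c1 c2) = (wf_prog c1 \<and> wf_prog c2)"
| "wf_prog (Seq c1 c2) = (wf_prog c1 \<and> wf_prog c2)"
| "wf_prog (While b c) = wf_prog c"

primrec modv :: "'v prog \<Rightarrow> 'v set" where
  "modv (Tick e) = {}"
| "modv (Assign x e) = {x}"
| "modv (Alloc x e) = {x}"
| "modv (Store e e') = {}"
| "modv (Load x e) = {x}"
| "modv (Free e) = {}"
| "modv (PChoice c1 p c2) = modv c1 \<union> modv c2"
| "modv (If b c1 c2) = modv c1 \<union> modv c2"
| "modv (Seq c1 c2) = modv c1 \<union> modv c2"
| "modv (While b c) = modv c"

definition not_in_vars :: "'v \<Rightarrow> ('v state \<Rightarrow> 'a) \<Rightarrow> bool" where
  "not_in_vars x g = (\<forall>s h v. g (s(x := v), h) = g (s, h))"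

definition sepsum :: "('v state \<Rightarrow> 'a::{plus,Inf}) \<Rightarrow> ('v state \<Rightarrow> 'a) \<Rightarrow> 'v state \<Rightarrow> 'a" where
  "sepsum f g = (\<lambda>(s, h). Inf {f (s, h1) + g (s, h2) | h1 h2. hdisj h1 h2 \<and> h = hunion h1 h2})"

definition tsub :: "ennreal \<Rightarrow> ennreal \<Rightarrow> ennreal" where
  "tsub a b = (if b = top then 0 else a - b)"

definition wand :: "('v state \<Rightarrow> ennreal) \<Rightarrow> ('v state \<Rightarrow> ennreal) \<Rightarrow> 'v state \<Rightarrow> ennreal" where
  "wand f g = (\<lambda>(s, h). SUP h' \<in> {h'. hdisj h h'}. tsub (g (s, hunion h h')) (f (s, h')))"

definition tm :: "'v aexp \<Rightarrow> 'v state \<Rightarrow> ennreal" where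
  "tm e = (\<lambda>(s, h). if h = hemp then ennreal (real (e s)) else top)"

definition emp :: "'v state \<Rightarrow> ennreal" where
  "emp = (\<lambda>(s, h). if h = hemp then 0 else top)"

definition pt :: "'v aexp \<Rightarrow> 'v aexp \<Rightarrow> 'v state \<Rightarrow> ennreal" where
  "pt e e' = (\<lambda>(s, h). if dom (Rep_heap h) = {e s} \<and> Rep_heap h (e s) = Some (e' s) then 0 else top)"

definition pt_any :: "'v aexp \<Rightarrow> 'v state \<Rightarrow> ennreal" where
  "pt_any e = (\<lambda>(s, h). if dom (Rep_heap h) = {e s} then 0 else top)"

primrec bigsep :: "(nat \<Rightarrow> 'v state \<Rightarrow> ennreal) \<Rightarrow> nat \<Rightarrow> 'v state \<Rightarrow> ennreal" where
  "bigsep F 0 = emp"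
| "bigsep F (Suc n) = sepsum (bigsep F n) (F (Suc n))"

definition subst :: "('v state \<Rightarrow> 'a) \<Rightarrow> 'v \<Rightarrow> 'v aexp \<Rightarrow> 'v state \<Rightarrow> 'a" where
  "subst f x e = (\<lambda>(s, h). f (s(x := e s), h))"

text \<open>The fresh logical variable v of alloc / lookup is rendered directly
  as a bound value n.\<close>
primrec ert :: "'v prog \<Rightarrow> ('v state \<Rightarrow> ennreal) \<Rightarrow> 'v state \<Rightarrow> ennreal" where
  "ert (Tick e) f = sepsum (tm e) f"
| "ert (Assign x e) f = subst f x e"
| "ert (Alloc x e) f = (\<lambda>(s, h). SUP n. wand
       (\<lambda>(s', h'). bigsep (\<lambda>i. pt (\<lambda>_. n + i - 1) (\<lambda>_. 0)) (e s') (s', h'))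
       (subst f x (\<lambda>_. n)) (s, h))"
| "ert (Store e e') f = sepsum (pt_any e) (wand (pt e e') f)"
| "ert (Load x e) f = (\<lambda>\<sigma>. INF n. sepsum (pt e (\<lambda>_. n))
       (wand (pt e (\<lambda>_. n)) (subst f x (\<lambda>_. n))) \<sigma>)"
| "ert (Free e) f = sepsum (pt_any e) f"
| "ert (PChoice c1 p c2) f = (\<lambda>\<sigma>. ennreal (p (fst \<sigma>)) * ert c1 f \<sigma>
       + ennreal (1 - p (fst \<sigma>)) * ert c2 f \<sigma>)"
| "ert (If b c1 c2) f = (\<lambda>\<sigma>. if b (fst \<sigma>) then ert c1 f \<sigma> else ert c2 f \<sigma>)"
| "ert (Seq c1 c2) f = ert c1 (ert c2 f)"
| "ert (While b c) f = lfp (\<lambda>g \<sigma>. if b (fst \<sigma>) then ert c g \<sigma> else f \<sigma>)"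

text \<open>Elements of A_\<pi> are ereal-valued functions X with -\<pi> \<le> X (hence never -\<infinity>).
  For atomic non-tick statements: ert(X + \<pi>) - \<pi>.\<close>
definition aert_atomic :: "('v state \<Rightarrow> real) \<Rightarrow> 'v prog \<Rightarrow> ('v state \<Rightarrow> ereal) \<Rightarrow> 'v state \<Rightarrow> ereal" where
  "aert_atomic \<pi> c X = (\<lambda>\<sigma>. enn2ereal (ert c (\<lambda>\<tau>. e2ennreal (X \<tau> + ereal (\<pi> \<tau>))) \<sigma>) - ereal (\<pi> \<sigma>))"

primrec aert :: "('v state \<Rightarrow> real) \<Rightarrow> 'v prog \<Rightarrow> ('v state \<Rightarrow> ereal) \<Rightarrow> 'v state \<Rightarrow> ereal" where
  "aert \<pi> (Tick e) X = (\<lambda>\<sigma>. ereal (real (e (fst \<sigma>))) + X \<sigma>)"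
| "aert \<pi> (Assign x e) X = aert_atomic \<pi> (Assign x e) X"
| "aert \<pi> (Alloc x e) X = aert_atomic \<pi> (Alloc x e) X"
| "aert \<pi> (Store e e') X = aert_atomic \<pi> (Store e e') X"
| "aert \<pi> (Load x e) X = aert_atomic \<pi> (Load x e) X"
| "aert \<pi> (Free e) X = aert_atomic \<pi> (Free e) X"
| "aert \<pi> (PChoice c1 p c2) X = (\<lambda>\<sigma>. ereal (p (fst \<sigma>)) * aert \<pi> c1 X \<sigma>
       + ereal (1 - p (fst \<sigma>)) * aert \<pi> c2 X \<sigma>)"
| "aert \<pi> (If b c1 c2) X = (\<lambda>\<sigma>. if b (fst \<sigma>) then aert \<pi> c1 X \<sigma> else aert \<pi> c2 X \<sigma>)"
| "aert \<pi> (Seq c1 c2) X = aert \<pi> c1 (aert \<pi> c2 X)"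
| "aert \<pi> (While b c) X =
     Inf {Y. (\<forall>\<sigma>. - ereal (\<pi> \<sigma>) \<le> Y \<sigma>)
           \<and> (\<forall>\<sigma>. (if b (fst \<sigma>) then aert \<pi> c Y \<sigma> else X \<sigma>) \<le> Y \<sigma>)}"

end

theory Submission
  imports Defs
begin

text \<open>On \<open>A\<^sub>\<pi>\<close> (\<open>amortized_space \<pi>\<close> below), amortisation is a change of coordinates:
  \<open>aert\<^sub>\<pi> C X = ert C (X + \<pi>) - \<pi>\<close> for every program, loops included, since \<open>X \<mapsto> X + \<pi>\<close>
  is an order isomorphism from \<open>A\<^sub>\<pi>\<close> onto the runtimes that maps the prefixed points of the
  amortized loop functional onto those of the ert one. The claim thus reduces to the frame
  rule \<open>ert C (f \<oplus> g) \<le> ert C f \<oplus> g\<close> for \<open>g\<close> independent of the variables modified by \<open>C\<close>,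
  applied to \<open>f = X + \<pi>\<^sub>1\<close> and \<open>g = \<pi>\<^sub>2\<close>; the hypothesis on \<open>X\<close> is exactly
  \<open>X + (\<pi>\<^sub>1 \<oplus> \<pi>\<^sub>2) \<le> (X + \<pi>\<^sub>1) \<oplus> \<pi>\<^sub>2\<close>. The frame rule follows by induction on \<open>C\<close>,
  with \<open>\<oplus>\<close> computed as a minimum over the finitely many splittings of the heap.\<close>

lemma Rep_hunion: "Rep_heap (hunion h1 h2) = Rep_heap h1 ++ Rep_heap h2"
proof -
  have "finite (dom (Rep_heap h)) \<and> 0 \<notin> dom (Rep_heap h)" for h
    using Rep_heap[of h] by auto
  then show ?thesis unfolding hunion_def by (subst Abs_heap_inverse) auto
qed

lemma Rep_hemp: "Rep_heap hemp = Map.empty"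
  unfolding hemp_def by (subst Abs_heap_inverse) auto

lemma heap_eqI: "Rep_heap h1 = Rep_heap h2 \<Longrightarrow> h1 = h2"
  by (simp add: Rep_heap_inject)

lemma hunion_hemp [simp]: "hunion hemp h = h" "hunion h hemp = h"
  by (auto intro!: heap_eqI simp: Rep_hunion Rep_hemp)

lemma hdisj_hemp [simp]: "hdisj hemp h" "hdisj h hemp"
  by (auto simp: hdisj_def Rep_hemp)

lemma hdisj_commute: "hdisj h1 h2 = hdisj h2 h1"
  by (auto simp: hdisj_def)

lemma hunion_commute: "hdisj h1 h2 \<Longrightarrow> hunion h1 h2 = hunion h2 h1"
  by (metis heap_eqI Rep_hunion hdisj_def map_add_comm)

lemma hunion_assoc: "hunion (hunion h1 h2) h3 = hunion h1 (hunion h2 h3)"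
  by (auto intro!: heap_eqI simp: Rep_hunion)

lemma hdisj_hunion_left: "hdisj (hunion h1 h2) h3 = (hdisj h1 h3 \<and> hdisj h2 h3)"
  by (auto simp: hdisj_def Rep_hunion)

lemma hdisj_hunion_right: "hdisj h3 (hunion h1 h2) = (hdisj h3 h1 \<and> hdisj h3 h2)"
  by (auto simp: hdisj_def Rep_hunion)

definition heap_splits :: "heap \<Rightarrow> (heap \<times> heap) set" where
  "heap_splits h = {(h1, h2). hdisj h1 h2 \<and> h = hunion h1 h2}"

lemma heap_splits_nonempty [simp]: "heap_splits h \<noteq> {}"
proof -
  have "(hemp, h) \<in> heap_splits h" by (simp add: heap_splits_def)
  then show ?thesis by blast
qed

text \<open>A splitting is determined by the domain of its first part.\<close>
lemma finite_heap_splits: "finite (heap_splits h)"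
proof -
  let ?split = "\<lambda>A. (Abs_heap (Rep_heap h |` A), Abs_heap (Rep_heap h |` (- A)))"
  have "heap_splits h \<subseteq> ?split ` Pow (dom (Rep_heap h))"
  proof
    fix p assume "p \<in> heap_splits h"
    then obtain h1 h2 where p: "p = (h1, h2)" "hdisj h1 h2"
      and h: "Rep_heap h = Rep_heap h1 ++ Rep_heap h2"
      by (auto simp: heap_splits_def Rep_hunion)
    have "Rep_heap h |` dom (Rep_heap h1) = Rep_heap h1"
         "Rep_heap h |` (- dom (Rep_heap h1)) = Rep_heap h2"
      using p(2) unfolding h hdisj_def
      by (auto simp: restrict_map_def map_add_def fun_eq_iff split: option.splits)
    then have "p = ?split (dom (Rep_heap h1))" using p(1) by (simp add: Rep_heap_inverse)
    then show "p \<in> ?split ` Pow (dom (Rep_heap h))" using h by auto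
  qed
  moreover have "finite (dom (Rep_heap h))" using Rep_heap[of h] by auto
  ultimately show ?thesis by (meson finite_Pow_iff finite_imageI finite_subset)
qed

lemma sepsum_eq_Min:
  fixes f g :: "'v state \<Rightarrow> 'a::{conditionally_complete_linorder, plus}"
  shows "sepsum f g (s, h) = Min ((\<lambda>(h1, h2). f (s, h1) + g (s, h2)) ` heap_splits h)"
proof -
  have "{f (s, h1) + g (s, h2) | h1 h2. hdisj h1 h2 \<and> h = hunion h1 h2}
        = (\<lambda>(h1, h2). f (s, h1) + g (s, h2)) ` heap_splits h"
    by (auto simp: heap_splits_def)
  then show ?thesis
    unfolding sepsum_def using finite_heap_splits by (simp add: cInf_eq_Min)
qed

lemma sepsum_le:
  fixes f g :: "'v state \<Rightarrow> 'a::{conditionally_complete_linorder, plus}"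
  assumes "hdisj h1 h2" "h = hunion h1 h2"
  shows "sepsum f g (s, h) \<le> f (s, h1) + g (s, h2)"
proof -
  have "(h1, h2) \<in> heap_splits h" using assms by (simp add: heap_splits_def)
  then show ?thesis
    unfolding sepsum_eq_Min using finite_heap_splits by (force intro: Min_le)
qed

lemma sepsum_obtain:
  fixes f g :: "'v state \<Rightarrow> 'a::{conditionally_complete_linorder, plus}"
  obtains h1 h2 where "hdisj h1 h2" "h = hunion h1 h2" "sepsum f g (s, h) = f (s, h1) + g (s, h2)"
proof -
  have "sepsum f g (s, h) \<in> (\<lambda>(h1, h2). f (s, h1) + g (s, h2)) ` heap_splits h"
    unfolding sepsum_eq_Min using finite_heap_splits by (intro Min_in) auto
  then show ?thesis using that by (auto simp: heap_splits_def)
qed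

lemma mono_sepsum_commute:
  fixes f g :: "'v state \<Rightarrow> 'a::{conditionally_complete_linorder, plus}"
    and \<phi> :: "'a \<Rightarrow> 'b::{conditionally_complete_linorder, plus}"
  assumes "mono \<phi>"
    and "\<And>h1 h2. hdisj h1 h2 \<Longrightarrow> \<phi> (f (s, h1) + g (s, h2)) = \<phi> (f (s, h1)) + \<phi> (g (s, h2))"
  shows "\<phi> (sepsum f g (s, h)) = sepsum (\<lambda>\<tau>. \<phi> (f \<tau>)) (\<lambda>\<tau>. \<phi> (g \<tau>)) (s, h)"
proof -
  have "\<phi> (sepsum f g (s, h)) = Min (\<phi> ` (\<lambda>(h1, h2). f (s, h1) + g (s, h2)) ` heap_splits h)"
    unfolding sepsum_eq_Min using finite_heap_splits by (intro mono_Min_commute assms(1)) auto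
  also have "\<phi> ` (\<lambda>(h1, h2). f (s, h1) + g (s, h2)) ` heap_splits h
      = (\<lambda>(h1, h2). \<phi> (f (s, h1)) + \<phi> (g (s, h2))) ` heap_splits h"
    unfolding image_image using assms(2) by (intro image_cong) (auto simp: heap_splits_def)
  finally show ?thesis by (simp add: sepsum_eq_Min)
qed

lemma sepsum_if_stack:
  "sepsum (\<lambda>\<tau>. if b (fst \<tau>) then f1 \<tau> else f2 \<tau>) g (s, h)
   = (if b s then sepsum f1 g (s, h) else sepsum f2 g (s, h))"
  unfolding sepsum_def by simp

lemma sepsum_mono:
  fixes f f' g g' :: "'v state \<Rightarrow> 'a::{conditionally_complete_linorder, ordered_ab_semigroup_add}"
  assumes "f \<le> f'" "g \<le> g'"
  shows "sepsum f g \<le> sepsum f' g'"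
proof (rule le_funI)
  fix \<sigma> :: "'v state"
  obtain s h where \<sigma>: "\<sigma> = (s, h)" by (cases \<sigma>)
  obtain h1 h2 where sp: "hdisj h1 h2" "h = hunion h1 h2"
      and min: "sepsum f' g' (s, h) = f' (s, h1) + g' (s, h2)"
    by (rule sepsum_obtain)
  from sp have "sepsum f g (s, h) \<le> f (s, h1) + g (s, h2)" by (rule sepsum_le)
  also have "\<dots> \<le> f' (s, h1) + g' (s, h2)" using assms by (simp add: add_mono le_funD)
  finally show "sepsum f g \<sigma> \<le> sepsum f' g' \<sigma>" using min \<sigma> by simp
qed

lemma sepsum_assoc_le:
  fixes f g k :: "'v state \<Rightarrow> 'a::{conditionally_complete_linorder, ordered_ab_semigroup_add}"
  shows "sepsum f (sepsum g k) \<sigma> \<le> sepsum (sepsum f g) k \<sigma>"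
proof -
  obtain s h where \<sigma>: "\<sigma> = (s, h)" by (cases \<sigma>)
  obtain h12 h3 where sp: "hdisj h12 h3" "h = hunion h12 h3"
      and min: "sepsum (sepsum f g) k (s, h) = sepsum f g (s, h12) + k (s, h3)"
    by (rule sepsum_obtain)
  obtain h1 h2 where sp': "hdisj h1 h2" "h12 = hunion h1 h2"
      and min': "sepsum f g (s, h12) = f (s, h1) + g (s, h2)"
    by (rule sepsum_obtain)
  have d: "hdisj h2 h3" "hdisj h1 (hunion h2 h3)" "h = hunion h1 (hunion h2 h3)"
    using sp sp' by (auto simp: hdisj_hunion_left hdisj_hunion_right hunion_assoc)
  have "sepsum f (sepsum g k) (s, h) \<le> f (s, h1) + sepsum g k (s, hunion h2 h3)"
    using d(2,3) by (rule sepsum_le)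
  also have "\<dots> \<le> f (s, h1) + (g (s, h2) + k (s, h3))"
    using d by (auto intro!: add_left_mono sepsum_le)
  finally show ?thesis using min min' \<sigma> by (simp add: add.assoc)
qed

type_synonym 'v runtime = "'v state \<Rightarrow> ennreal"

lemma sepsum_SUP_le:
  fixes f :: "'i \<Rightarrow> 'v runtime" and g :: "'v runtime"
  shows "(SUP i\<in>I. sepsum (f i) g \<sigma>) \<le> sepsum (\<lambda>\<tau>. SUP i\<in>I. f i \<tau>) g \<sigma>"
proof (rule SUP_least)
  fix i assume "i \<in> I"
  then have "f i \<le> (\<lambda>\<tau>. SUP i\<in>I. f i \<tau>)" by (auto intro!: le_funI SUP_upper)
  then show "sepsum (f i) g \<sigma> \<le> sepsum (\<lambda>\<tau>. SUP i\<in>I. f i \<tau>) g \<sigma>"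
    by (rule le_funD[OF sepsum_mono[OF _ order.refl]])
qed

lemma sepsum_INF_le:
  fixes f :: "nat \<Rightarrow> 'v runtime" and g :: "'v runtime"
  shows "(INF i. sepsum (f i) g \<sigma>) \<le> sepsum (\<lambda>\<tau>. INF i. f i \<tau>) g \<sigma>"
proof -
  obtain s h where \<sigma>: "\<sigma> = (s, h)" by (cases \<sigma>)
  obtain h1 h2 where sp: "hdisj h1 h2" "h = hunion h1 h2"
      and min: "sepsum (\<lambda>\<tau>. INF i. f i \<tau>) g (s, h) = (INF i. f i (s, h1)) + g (s, h2)"
    by (rule sepsum_obtain)
  have "(INF i. sepsum (f i) g (s, h)) \<le> (INF i. f i (s, h1) + g (s, h2))"
    using sp by (auto intro!: INF_mono' sepsum_le)
  also have "\<dots> = (INF i. f i (s, h1)) + g (s, h2)" by (rule INF_ennreal_add_const)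
  finally show ?thesis using min \<sigma> by simp
qed

lemma sepsum_convex_le:
  fixes f1 f2 g :: "'v runtime" and p :: "'v stack \<Rightarrow> real"
  assumes "0 \<le> p s" "p s \<le> 1"
  shows "ennreal (p s) * sepsum f1 g (s, h) + ennreal (1 - p s) * sepsum f2 g (s, h)
     \<le> sepsum (\<lambda>\<tau>. ennreal (p (fst \<tau>)) * f1 \<tau> + ennreal (1 - p (fst \<tau>)) * f2 \<tau>) g (s, h)"
proof -
  let ?f = "\<lambda>\<tau>. ennreal (p (fst \<tau>)) * f1 \<tau> + ennreal (1 - p (fst \<tau>)) * f2 \<tau>"
  obtain h1 h2 where sp: "hdisj h1 h2" "h = hunion h1 h2"
      and min: "sepsum ?f g (s, h) = ?f (s, h1) + g (s, h2)"
    by (rule sepsum_obtain)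
  have p1: "ennreal (p s) + ennreal (1 - p s) = 1"
    using assms by (simp flip: ennreal_plus)
  have "ennreal (p s) * sepsum f1 g (s, h) + ennreal (1 - p s) * sepsum f2 g (s, h)
     \<le> ennreal (p s) * (f1 (s, h1) + g (s, h2)) + ennreal (1 - p s) * (f2 (s, h1) + g (s, h2))"
    using sp by (intro add_mono mult_left_mono sepsum_le) simp_all
  also have "\<dots> = ennreal (p s) * f1 (s, h1) + ennreal (1 - p s) * f2 (s, h1)
       + (ennreal (p s) + ennreal (1 - p s)) * g (s, h2)"
    by (simp add: algebra_simps)
  finally show ?thesis unfolding min p1 by simp
qed

lemma sepsum_tm: "sepsum (tm e) f (s, h) = ennreal (real (e s)) + f (s, h)"
proof (rule antisym)
  show "sepsum (tm e) f (s, h) \<le> ennreal (real (e s)) + f (s, h)"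
    using sepsum_le[of hemp h h "tm e" f s] by (simp add: tm_def)
  obtain h1 h2 where "hdisj h1 h2" "h = hunion h1 h2"
    "sepsum (tm e) f (s, h) = tm e (s, h1) + f (s, h2)" by (rule sepsum_obtain)
  then show "ennreal (real (e s)) + f (s, h) \<le> sepsum (tm e) f (s, h)"
    by (cases "h1 = hemp") (auto simp: tm_def)
qed

lemma subst_sepsum:
  "not_in_vars x g \<Longrightarrow> subst (sepsum f g) x e = sepsum (subst f x e) g"
  unfolding subst_def sepsum_def not_in_vars_def by (auto intro!: ext)

lemma subst_mono: "f \<le> f' \<Longrightarrow> subst f x e \<le> subst f' x e"
  unfolding subst_def by (auto intro!: le_funI le_funD[of f f'])

lemma tsub_mono: "a \<le> b \<Longrightarrow> tsub a c \<le> tsub b c"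
  unfolding tsub_def by (auto intro: ennreal_minus_mono)

lemma wand_mono: "f \<le> f' \<Longrightarrow> wand p f \<le> wand p f'"
  unfolding wand_def by (auto intro!: le_funI SUP_mono' tsub_mono le_funD[of f f'])

lemma wand_sepsum_le: "wand p (sepsum f g) \<sigma> \<le> sepsum (wand p f) g \<sigma>"
proof -
  obtain s h where \<sigma>: "\<sigma> = (s, h)" by (cases \<sigma>)
  obtain h1 h2 where sp: "hdisj h1 h2" "h = hunion h1 h2"
      and min: "sepsum (wand p f) g (s, h) = wand p f (s, h1) + g (s, h2)"
    by (rule sepsum_obtain)
  have "tsub (sepsum f g (s, hunion h h')) (p (s, h')) \<le> wand p f (s, h1) + g (s, h2)"
    if "hdisj h h'" for h'
  proof -
    have d: "hdisj (hunion h1 h') h2" "hdisj h1 h'"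
      using sp that by (auto simp: hdisj_hunion_left hdisj_hunion_right hdisj_commute)
    have "hunion h h' = hunion (hunion h1 h') h2"
      using sp d by (metis hunion_assoc hunion_commute)
    with d(1) have "tsub (sepsum f g (s, hunion h h')) (p (s, h'))
        \<le> tsub (f (s, hunion h1 h') + g (s, h2)) (p (s, h'))"
      by (intro tsub_mono sepsum_le)
    also have "\<dots> \<le> tsub (f (s, hunion h1 h')) (p (s, h')) + g (s, h2)"
      unfolding tsub_def by (auto simp: add_diff_le_ennreal add.commute)
    also have "\<dots> \<le> wand p f (s, h1) + g (s, h2)"
      unfolding wand_def using d(2) by (auto intro!: add_right_mono SUP_upper)
    finally show ?thesis .
  qed
  then show ?thesis unfolding \<sigma> min wand_def[of p "sepsum f g"] by (auto intro!: SUP_least)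
qed

lemma ert_mono: "f \<le> f' \<Longrightarrow> ert C f \<le> ert C f'"
proof (induction C arbitrary: f f')
  case (Alloc x e)
  then show ?case
    by (auto intro!: le_funI SUP_mono' le_funD[OF wand_mono[OF subst_mono]])
next
  case (Load x e)
  then show ?case
    by (auto intro!: le_funI INF_mono' le_funD[OF sepsum_mono[OF order.refl wand_mono[OF subst_mono]]])
next
  case (PChoice c1 p c2)
  show ?case
    using PChoice.IH[OF PChoice.prems] by (auto intro!: le_funI add_mono mult_left_mono dest: le_funD)
next
  case (If b c1 c2)
  show ?case using If.IH[OF If.prems] by (auto intro!: le_funI dest: le_funD)
next
  case (While b c)
  show ?case
    unfolding ert.simps using le_funD[OF While.prems] by (intro lfp_mono le_funI) simp
qed (auto intro: sepsum_mono subst_mono wand_mono)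

lemma ert_Alloc_frame:
  fixes g :: "'v runtime"
  assumes "not_in_vars x g"
  shows "ert (Alloc x e) (sepsum f g) \<le> sepsum (ert (Alloc x e) f) g"
proof (rule le_funI)
  fix \<sigma> :: "'v state"
  obtain s h where \<sigma>: "\<sigma> = (s, h)" by (cases \<sigma>)
  let ?cells = "\<lambda>n. (\<lambda>(s', h'). bigsep (\<lambda>i. pt (\<lambda>_. n + i - 1) (\<lambda>_. 0)) (e s') (s', h'))"
  have "ert (Alloc x e) (sepsum f g) (s, h)
      = (SUP n. wand (?cells n) (sepsum (subst f x (\<lambda>_. n)) g) (s, h))"
    using assms by (simp add: subst_sepsum)
  also have "\<dots> \<le> (SUP n. sepsum (wand (?cells n) (subst f x (\<lambda>_. n))) g (s, h))"
    by (intro SUP_mono' wand_sepsum_le)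
  also have "\<dots> \<le> sepsum (\<lambda>\<tau>. SUP n. wand (?cells n) (subst f x (\<lambda>_. n)) \<tau>) g (s, h)"
    by (rule sepsum_SUP_le)
  also have "\<dots> = sepsum (ert (Alloc x e) f) g (s, h)"
    by (simp add: case_prod_beta')
  finally show "ert (Alloc x e) (sepsum f g) \<sigma> \<le> sepsum (ert (Alloc x e) f) g \<sigma>"
    using \<sigma> by simp
qed

lemma ert_Load_frame:
  fixes g :: "'v runtime"
  assumes "not_in_vars x g"
  shows "ert (Load x e) (sepsum f g) \<le> sepsum (ert (Load x e) f) g"
proof (rule le_funI)
  fix \<sigma> :: "'v state"
  let ?lookup = "\<lambda>n. sepsum (pt e (\<lambda>_. n)) (wand (pt e (\<lambda>_. n)) (subst f x (\<lambda>_. n)))"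
  have "sepsum (pt e (\<lambda>_. n)) (wand (pt e (\<lambda>_. n)) (sepsum (subst f x (\<lambda>_. n)) g))
      \<le> sepsum (?lookup n) g" for n
  proof -
    have "sepsum (pt e (\<lambda>_. n)) (wand (pt e (\<lambda>_. n)) (sepsum (subst f x (\<lambda>_. n)) g))
        \<le> sepsum (pt e (\<lambda>_. n)) (sepsum (wand (pt e (\<lambda>_. n)) (subst f x (\<lambda>_. n))) g)"
      by (intro sepsum_mono order.refl le_funI wand_sepsum_le)
    also have "\<dots> \<le> sepsum (?lookup n) g"
      by (intro le_funI sepsum_assoc_le)
    finally show ?thesis .
  qed
  then have "ert (Load x e) (sepsum f g) \<sigma> \<le> (INF n. sepsum (?lookup n) g \<sigma>)"
    using assms by (auto simp: subst_sepsum intro!: INF_mono' dest: le_funD)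
  also have "\<dots> \<le> sepsum (\<lambda>\<tau>. INF n. ?lookup n \<tau>) g \<sigma>"
    by (rule sepsum_INF_le)
  finally show "ert (Load x e) (sepsum f g) \<sigma> \<le> sepsum (ert (Load x e) f) g \<sigma>"
    by simp
qed

lemma ert_While_frame:
  fixes g :: "'v runtime"
  assumes body: "\<And>f. ert c (sepsum f g) \<le> sepsum (ert c f) g"
  shows "ert (While b c) (sepsum f g) \<le> sepsum (ert (While b c) f) g"
proof -
  let ?F = "\<lambda>f u \<sigma>. if b (fst \<sigma>) then ert c u \<sigma> else f \<sigma>"
  let ?L = "lfp (?F f)"
  have "mono (?F f)" by (auto intro!: monoI le_funI dest: le_funD[OF ert_mono])
  then have unfold: "?L = ?F f ?L" by (rule lfp_unfold)
  have "?F (sepsum f g) (sepsum ?L g) \<le> sepsum ?L g"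
  proof (rule le_funI)
    fix \<sigma> :: "'v state"
    obtain s h where \<sigma>: "\<sigma> = (s, h)" by (cases \<sigma>)
    have "?F (sepsum f g) (sepsum ?L g) (s, h)
        \<le> (if b s then sepsum (ert c ?L) g (s, h) else sepsum f g (s, h))"
      using le_funD[OF body[of ?L], of "(s, h)"] by simp
    also have "\<dots> = sepsum (?F f ?L) g (s, h)"
      by (simp only: sepsum_if_stack)
    also have "\<dots> = sepsum ?L g (s, h)"
      using unfold by metis
    finally show "?F (sepsum f g) (sepsum ?L g) \<sigma> \<le> sepsum ?L g \<sigma>" unfolding \<sigma> .
  qed
  then show ?thesis by (simp add: lfp_lowerbound)
qed

lemma ert_frame:
  fixes g :: "'v runtime"
  assumes "wf_prog C" and "\<forall>x\<in>modv C. not_in_vars x g"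
  shows "ert C (sepsum f g) \<le> sepsum (ert C f) g"
  using assms
proof (induction C arbitrary: f)
  case (Assign x e)
  then show ?case by (simp add: subst_sepsum)
next
  case (Alloc x e)
  then show ?case by (intro ert_Alloc_frame) simp
next
  case (Load x e)
  then show ?case by (intro ert_Load_frame) simp
next
  case (Store e e')
  have "sepsum (pt_any e) (wand (pt e e') (sepsum f g))
      \<le> sepsum (pt_any e) (sepsum (wand (pt e e') f) g)"
    by (intro sepsum_mono order.refl le_funI wand_sepsum_le)
  also have "\<dots> \<le> sepsum (sepsum (pt_any e) (wand (pt e e') f)) g"
    by (intro le_funI sepsum_assoc_le)
  finally show ?case by simp
next
  case (PChoice c1 p c2)
  show ?case
  proof (rule le_funI)
    fix \<sigma> :: "'v state"
    obtain s h where \<sigma>: "\<sigma> = (s, h)" by (cases \<sigma>)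
    have "ert c1 (sepsum f g) \<le> sepsum (ert c1 f) g" "ert c2 (sepsum f g) \<le> sepsum (ert c2 f) g"
      using PChoice by auto
    then have "ert (PChoice c1 p c2) (sepsum f g) (s, h)
        \<le> ennreal (p s) * sepsum (ert c1 f) g (s, h) + ennreal (1 - p s) * sepsum (ert c2 f) g (s, h)"
      by (auto intro!: add_mono mult_left_mono dest: le_funD)
    also have "\<dots> \<le> sepsum (ert (PChoice c1 p c2) f) g (s, h)"
      using PChoice.prems by (simp add: sepsum_convex_le)
    finally show "ert (PChoice c1 p c2) (sepsum f g) \<sigma> \<le> sepsum (ert (PChoice c1 p c2) f) g \<sigma>"
      using \<sigma> by simp
  qed
next
  case (If b c1 c2)
  then have "ert c1 (sepsum f g) \<le> sepsum (ert c1 f) g" "ert c2 (sepsum f g) \<le> sepsum (ert c2 f) g"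
    by auto
  then show ?case by (auto intro!: le_funI simp: sepsum_if_stack dest: le_funD)
next
  case (Seq c1 c2)
  then have "ert c1 (ert c2 (sepsum f g)) \<le> ert c1 (sepsum (ert c2 f) g)"
    by (intro ert_mono) auto
  also have "\<dots> \<le> sepsum (ert c1 (ert c2 f)) g" using Seq by auto
  finally show ?case by simp
next
  case (While b c)
  then show ?case by (intro ert_While_frame) auto
qed (auto intro: le_funI sepsum_assoc_le)

definition amortized_space :: "('v state \<Rightarrow> real) \<Rightarrow> ('v state \<Rightarrow> ereal) set" where
  "amortized_space \<pi> = {X. \<forall>\<sigma>. - ereal (\<pi> \<sigma>) \<le> X \<sigma>}"

text \<open>\<open>e2ennreal\<close> clips negative values to \<open>0\<close>, so \<open>plus_pot \<pi> X\<close> is \<open>X + \<pi>\<close> only for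
  \<open>X \<in> amortized_space \<pi>\<close>.\<close>
definition plus_pot :: "('v state \<Rightarrow> real) \<Rightarrow> ('v state \<Rightarrow> ereal) \<Rightarrow> 'v runtime" where
  "plus_pot \<pi> X = (\<lambda>\<sigma>. e2ennreal (X \<sigma> + ereal (\<pi> \<sigma>)))"

definition minus_pot :: "('v state \<Rightarrow> real) \<Rightarrow> 'v runtime \<Rightarrow> 'v state \<Rightarrow> ereal" where
  "minus_pot \<pi> f = (\<lambda>\<sigma>. enn2ereal (f \<sigma>) - ereal (\<pi> \<sigma>))"

lemma amortized_space_add_pot_nonneg:
  assumes "X \<in> amortized_space \<pi>"
  shows "0 \<le> X \<sigma> + ereal (\<pi> \<sigma>)"
proof -
  have "- ereal (\<pi> \<sigma>) \<le> X \<sigma>" using assms unfolding amortized_space_def by blast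
  then show ?thesis by (cases "X \<sigma>") auto
qed

lemma minus_pot_plus_pot: "X \<in> amortized_space \<pi> \<Longrightarrow> minus_pot \<pi> (plus_pot \<pi> X) = X"
proof (rule ext)
  fix \<sigma>
  assume "X \<in> amortized_space \<pi>"
  then have "0 \<le> X \<sigma> + ereal (\<pi> \<sigma>)" by (rule amortized_space_add_pot_nonneg)
  then show "minus_pot \<pi> (plus_pot \<pi> X) \<sigma> = X \<sigma>"
    unfolding minus_pot_def plus_pot_def by (cases "X \<sigma>") (auto simp: enn2ereal_e2ennreal)
qed

lemma minus_pot_add_pot: "minus_pot \<pi> f \<sigma> + ereal (\<pi> \<sigma>) = enn2ereal (f \<sigma>)"
  unfolding minus_pot_def using enn2ereal_nonneg[of "f \<sigma>"] by (cases "enn2ereal (f \<sigma>)") auto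

lemma plus_pot_minus_pot: "plus_pot \<pi> (minus_pot \<pi> f) = f"
  unfolding plus_pot_def by (simp add: minus_pot_add_pot)

lemma minus_pot_in_amortized_space: "minus_pot \<pi> f \<in> amortized_space \<pi>"
  unfolding amortized_space_def minus_pot_def using enn2ereal_nonneg
  by (auto simp: ereal_minus_mono[of 0 _ "ereal _" "ereal _", simplified])

lemma minus_pot_le_iff: "minus_pot \<pi> f \<le> minus_pot \<pi> g \<longleftrightarrow> f \<le> g"
proof -
  have "enn2ereal a - ereal r \<le> enn2ereal b - ereal r \<longleftrightarrow> a \<le> b" for a b r
    using enn2ereal_nonneg[of a] enn2ereal_nonneg[of b]
    by (cases "enn2ereal a"; cases "enn2ereal b") (auto simp: less_eq_ennreal.rep_eq)
  then show ?thesis unfolding minus_pot_def le_fun_def by simp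
qed

lemma minus_pot_Inf: "minus_pot \<pi> (Inf U) = Inf (minus_pot \<pi> ` U)"
proof (rule ext)
  fix \<sigma>
  show "minus_pot \<pi> (Inf U) \<sigma> = Inf (minus_pot \<pi> ` U) \<sigma>"
  proof (cases "U = {}")
    case False
    have "enn2ereal (INF f\<in>U. f \<sigma>) = (INF f\<in>U. enn2ereal (f \<sigma>))"
      by (simp add: Inf_ennreal.rep_eq image_image)
    then show ?thesis using False
      by (simp add: minus_pot_def minus_ereal_def image_image INF_ereal_add_left)
  qed (simp add: minus_pot_def top_ereal_def)
qed

lemma ereal_convex_combination_minus:
  fixes a b :: ereal and p r :: real
  assumes "0 \<le> a" "0 \<le> b" "0 \<le> p" "p \<le> 1"
  shows "ereal p * (a - ereal r) + ereal (1 - p) * (b - ereal r)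
       = ereal p * a + ereal (1 - p) * b - ereal r"
  using assms by (cases a; cases b; cases "p = 0"; cases "p = 1") (auto simp: algebra_simps)

theorem aert_eq_minus_pot_ert:
  assumes "wf_prog C" and "X \<in> amortized_space \<pi>"
  shows "aert \<pi> C X = minus_pot \<pi> (ert C (plus_pot \<pi> X))"
  using assms
proof (induction C arbitrary: X)
  case (Tick e)
  show ?case
  proof (rule ext)
    fix \<sigma> :: "'a state"
    obtain s h where \<sigma>: "\<sigma> = (s, h)" by (cases \<sigma>)
    have "minus_pot \<pi> (ert (Tick e) (plus_pot \<pi> X)) \<sigma>
        = ereal (real (e s)) + minus_pot \<pi> (plus_pot \<pi> X) \<sigma>"
      using enn2ereal_nonneg[of "plus_pot \<pi> X \<sigma>"] unfolding \<sigma>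
      by (cases "enn2ereal (plus_pot \<pi> X (s, h))")
        (auto simp: sepsum_tm minus_pot_def plus_ennreal.rep_eq)
    then show "aert \<pi> (Tick e) X \<sigma> = minus_pot \<pi> (ert (Tick e) (plus_pot \<pi> X)) \<sigma>"
      using Tick.prems \<sigma> by (simp add: minus_pot_plus_pot)
  qed
next
  case (PChoice c1 p c2)
  then show ?case
    by (auto intro!: ext simp: minus_pot_def plus_ennreal.rep_eq times_ennreal.rep_eq
        ereal_convex_combination_minus)
next
  case (If b c1 c2)
  then show ?case by (auto intro!: ext simp: minus_pot_def)
next
  case (Seq c1 c2)
  then show ?case by (simp add: minus_pot_in_amortized_space plus_pot_minus_pot)
next
  case (While b c)
  let ?G = "\<lambda>u \<sigma>. if b (fst \<sigma>) then ert c u \<sigma> else plus_pot \<pi> X \<sigma>"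
  let ?F = "\<lambda>Y \<sigma>. if b (fst \<sigma>) then aert \<pi> c Y \<sigma> else X \<sigma>"
  have F_G: "?F Y = minus_pot \<pi> (?G (plus_pot \<pi> Y))" if "Y \<in> amortized_space \<pi>" for Y
    using While.IH[OF _ that] While.prems fun_cong[OF minus_pot_plus_pot[OF While.prems(2)]]
    by (auto intro!: ext simp: minus_pot_def)
  have "{Y. (\<forall>\<sigma>. - ereal (\<pi> \<sigma>) \<le> Y \<sigma>) \<and> (\<forall>\<sigma>. ?F Y \<sigma> \<le> Y \<sigma>)}
      = minus_pot \<pi> ` {u. ?G u \<le> u}"
  proof (intro set_eqI iffI)
    fix Y assume "Y \<in> {Y. (\<forall>\<sigma>. - ereal (\<pi> \<sigma>) \<le> Y \<sigma>) \<and> (\<forall>\<sigma>. ?F Y \<sigma> \<le> Y \<sigma>)}"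
    then have Y: "Y \<in> amortized_space \<pi>" "?F Y \<le> Y"
      by (auto simp: amortized_space_def le_fun_def)
    then have "minus_pot \<pi> (?G (plus_pot \<pi> Y)) \<le> minus_pot \<pi> (plus_pot \<pi> Y)"
      by (simp add: F_G minus_pot_plus_pot)
    then have "?G (plus_pot \<pi> Y) \<le> plus_pot \<pi> Y" by (simp only: minus_pot_le_iff)
    then show "Y \<in> minus_pot \<pi> ` {u. ?G u \<le> u}"
      by (intro image_eqI[of _ _ "plus_pot \<pi> Y"]) (simp_all add: minus_pot_plus_pot Y(1))
  next
    fix Y assume "Y \<in> minus_pot \<pi> ` {u. ?G u \<le> u}"
    then obtain u where Y: "Y = minus_pot \<pi> u" and u: "?G u \<le> u" by blast
    from u have "?F (minus_pot \<pi> u) \<le> minus_pot \<pi> u"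
      unfolding F_G[OF minus_pot_in_amortized_space] plus_pot_minus_pot minus_pot_le_iff .
    then show "Y \<in> {Y. (\<forall>\<sigma>. - ereal (\<pi> \<sigma>) \<le> Y \<sigma>) \<and> (\<forall>\<sigma>. ?F Y \<sigma> \<le> Y \<sigma>)}"
      unfolding Y using minus_pot_in_amortized_space[of \<pi> u]
      by (auto simp: amortized_space_def le_fun_def)
  qed
  then show ?case by (simp only: aert.simps ert.simps lfp_def minus_pot_Inf)
qed (auto intro!: ext simp: aert_atomic_def minus_pot_def plus_pot_def)

lemma e2ennreal_add: "0 \<le> a \<Longrightarrow> 0 \<le> b \<Longrightarrow> e2ennreal (a + b) = e2ennreal a + e2ennreal b"
  by (metis enn2ereal_e2ennreal enn2ereal_inject plus_ennreal.rep_eq add_nonneg_nonneg)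

lemma enn2ereal_sepsum:
  "enn2ereal (sepsum f g \<sigma>) = sepsum (\<lambda>\<tau>. enn2ereal (f \<tau>)) (\<lambda>\<tau>. enn2ereal (g \<tau>)) \<sigma>"
  by (cases \<sigma>) (simp add: mono_sepsum_commute mono_def less_eq_ennreal.rep_eq plus_ennreal.rep_eq)

lemma plus_pot_sepsum_le:
  fixes \<pi>1 \<pi>2 :: "'v state \<Rightarrow> real"
  assumes "X \<in> amortized_space \<pi>1" and "\<forall>\<sigma>. 0 \<le> \<pi>2 \<sigma>"
    and "\<forall>\<sigma>. X \<sigma> + ereal (sepsum \<pi>1 \<pi>2 \<sigma>)
          \<le> sepsum (\<lambda>\<tau>. X \<tau> + ereal (\<pi>1 \<tau>)) (\<lambda>\<tau>. ereal (\<pi>2 \<tau>)) \<sigma>"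
  shows "plus_pot (sepsum \<pi>1 \<pi>2) X \<le> sepsum (plus_pot \<pi>1 X) (\<lambda>\<tau>. ennreal (\<pi>2 \<tau>))"
proof (rule le_funI)
  fix \<sigma> :: "'v state"
  obtain s h where \<sigma>: "\<sigma> = (s, h)" by (cases \<sigma>)
  have "0 \<le> X \<tau> + ereal (\<pi>1 \<tau>)" for \<tau>
    using assms(1) by (rule amortized_space_add_pot_nonneg)
  then have "e2ennreal (sepsum (\<lambda>\<tau>. X \<tau> + ereal (\<pi>1 \<tau>)) (\<lambda>\<tau>. ereal (\<pi>2 \<tau>)) (s, h))
      = sepsum (plus_pot \<pi>1 X) (\<lambda>\<tau>. ennreal (\<pi>2 \<tau>)) (s, h)"
    using assms(2) unfolding plus_pot_def
    by (subst mono_sepsum_commute) (auto simp: mono_def e2ennreal_mono e2ennreal_add)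
  then show "plus_pot (sepsum \<pi>1 \<pi>2) X \<sigma> \<le> sepsum (plus_pot \<pi>1 X) (\<lambda>\<tau>. ennreal (\<pi>2 \<tau>)) \<sigma>"
    using assms(3) unfolding \<sigma> plus_pot_def by (metis e2ennreal_mono)
qed

theorem mainTheorem6:
  fixes \<pi>1 \<pi>2 :: "('v::finite) state \<Rightarrow> real"
    and C :: "'v prog"
    and X :: "'v state \<Rightarrow> ereal"
  assumes pot1: "\<forall>\<sigma>. 0 \<le> \<pi>1 \<sigma>"
    and pot2: "\<forall>\<sigma>. 0 \<le> \<pi>2 \<sigma>"
    and le: "\<forall>\<sigma>. \<pi>1 \<sigma> \<le> sepsum \<pi>1 \<pi>2 \<sigma>"
    and wf: "wf_prog C"
    and XA: "\<forall>\<sigma>. - ereal (\<pi>1 \<sigma>) \<le> X \<sigma>"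
    and modC: "\<forall>x \<in> modv C. not_in_vars x \<pi>2"
    and Xle: "\<forall>\<sigma>. X \<sigma> + ereal (sepsum \<pi>1 \<pi>2 \<sigma>)
                  \<le> sepsum (\<lambda>\<tau>. X \<tau> + ereal (\<pi>1 \<tau>)) (\<lambda>\<tau>. ereal (\<pi>2 \<tau>)) \<sigma>"
  shows "\<forall>\<sigma>. aert (sepsum \<pi>1 \<pi>2) C X \<sigma>
            \<le> sepsum (\<lambda>\<tau>. aert \<pi>1 C X \<tau> + ereal (\<pi>1 \<tau>)) (\<lambda>\<tau>. ereal (\<pi>2 \<tau>)) \<sigma>
              - ereal (sepsum \<pi>1 \<pi>2 \<sigma>)"
proof
  fix \<sigma>
  let ?\<pi> = "sepsum \<pi>1 \<pi>2" and ?g = "\<lambda>\<tau>. ennreal (\<pi>2 \<tau>)"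
  have X1: "X \<in> amortized_space \<pi>1" using XA by (simp add: amortized_space_def)
  have "- ereal (?\<pi> \<tau>) \<le> X \<tau>" for \<tau>
    using le XA by (meson ereal_less_eq(3) ereal_uminus_le_reorder order_trans)
  then have X12: "X \<in> amortized_space ?\<pi>" by (simp add: amortized_space_def)
  have "ert C (plus_pot ?\<pi> X) \<le> ert C (sepsum (plus_pot \<pi>1 X) ?g)"
    by (intro ert_mono plus_pot_sepsum_le X1 pot2 Xle)
  also have "\<dots> \<le> sepsum (ert C (plus_pot \<pi>1 X)) ?g"
    using wf modC by (intro ert_frame) (auto simp: not_in_vars_def)
  finally have frame: "ert C (plus_pot ?\<pi> X) \<sigma> \<le> sepsum (ert C (plus_pot \<pi>1 X)) ?g \<sigma>"
    by (rule le_funD)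
  have "aert ?\<pi> C X \<sigma> = enn2ereal (ert C (plus_pot ?\<pi> X) \<sigma>) - ereal (?\<pi> \<sigma>)"
    using wf X12 by (simp add: aert_eq_minus_pot_ert minus_pot_def)
  also have "\<dots> \<le> enn2ereal (sepsum (ert C (plus_pot \<pi>1 X)) ?g \<sigma>) - ereal (?\<pi> \<sigma>)"
    using frame by (intro ereal_minus_mono) (simp_all add: less_eq_ennreal.rep_eq)
  also have "\<dots> = sepsum (\<lambda>\<tau>. aert \<pi>1 C X \<tau> + ereal (\<pi>1 \<tau>)) (\<lambda>\<tau>. ereal (\<pi>2 \<tau>)) \<sigma>
      - ereal (?\<pi> \<sigma>)"
    using X1 wf by (simp add: enn2ereal_sepsum aert_eq_minus_pot_ert minus_pot_add_pot pot2[rule_format])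
  finally show "aert ?\<pi> C X \<sigma> \<le> sepsum (\<lambda>\<tau>. aert \<pi>1 C X \<tau> + ereal (\<pi>1 \<tau>))
      (\<lambda>\<tau>. ereal (\<pi>2 \<tau>)) \<sigma> - ereal (?\<pi> \<sigma>)" .
qed

end
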